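(* Let $L$ be a Lie algebra over a field of characteristic $\neq 2$, $U(L)$ its (associative) universal enveloping algebra with Hopf comultiplication $\Delta$, let $r=q^{-1}$ where $q\colon U(L)\to U(L)$, $q(x)=\sum x_{(1)}x_{(2)}$, and define a new product on $U(L)$ by $x*y=\sum r(x_{(1)})\,y\,r(x_{(2)})$. Then: (i) $\sum x_{(1)}*(y*(x_{(2)}*z))=\sum (x_{(1)}*(y*x_{(2)}))*z$ for all $x,y,z\in U(L)$; (ii) $a*b=b*a$ for all $a,b\in L$; (iii) $a*(b*c)-b*(a*c)=\tfrac14[[a,b],c]$ for all $a,b,c\in L$.
   Context: $U(L)$ is a Hopf algebra with $\Delta(a)=a\otimes1+1\otimes a$ for $a\in L$, Sweedler notation $\Delta(x)=\sum x_{(1)}\otimes x_{(2)}$. The linear map $q(x)=\sum x_{(1)}x_{(2)}$ is bijective (it preserves the PBW filtration and acts as multiplication by $2^n$ on the $n$-th graded piece), so $r=q^{-1}$ is well defined; $r$ is a coalgebra isomorphism and $x=\sum r(x_{(1)})r(x_{(2)})$. *)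

theory Defs
  imports Complex_Main "HOL-Library.Poly_Mapping"
begin

definition lie_algebra :: "('k::field \<Rightarrow> 'l::ab_group_add \<Rightarrow> 'l) \<Rightarrow> ('l \<Rightarrow> 'l \<Rightarrow> 'l) \<Rightarrow> bool" where
  "lie_algebra scale br \<longleftrightarrow> vector_space scale \<and>
     (\<forall>a b c. br (a + b) c = br a c + br b c) \<and>
     (\<forall>a b c. br a (b + c) = br a b + br a c) \<and>
     (\<forall>k a b. br (scale k a) b = scale k (br a b)) \<and>
     (\<forall>k a b. br a (scale k b) = scale k (br a b)) \<and>
     (\<forall>a. br a a = 0) \<and>
     (\<forall>a b c. br a (br b c) + br b (br c a) + br c (br a b) = 0)"

text \<open>Free associative unital algebra over 'k on the set 'l: finitely supported
 functions on words.\<close>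
type_synonym ('l, 'k) fa = "'l list \<Rightarrow>\<^sub>0 'k"

definition fa_smult :: "'k::field \<Rightarrow> ('l, 'k) fa \<Rightarrow> ('l, 'k) fa" where
  "fa_smult c p = Poly_Mapping.map (\<lambda>x. c * x) p"

definition fa_mult :: "('l, 'k::field) fa \<Rightarrow> ('l, 'k) fa \<Rightarrow> ('l, 'k) fa" where
  "fa_mult p q = (\<Sum>u\<in>Poly_Mapping.keys p. \<Sum>v\<in>Poly_Mapping.keys q. Poly_Mapping.single (u @ v) (Poly_Mapping.lookup p u * Poly_Mapping.lookup q v))"

definition fa_word :: "'l list \<Rightarrow> ('l, 'k::field) fa" where
  "fa_word w = Poly_Mapping.single w 1"

definition fa_gen :: "'l \<Rightarrow> ('l, 'k::field) fa" where
  "fa_gen a = fa_word [a]"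

text \<open>Two-sided ideal defining U(L) = free algebra on L modulo linearity
 relations and ab - ba - [a,b].\<close>
inductive_set uea_ideal :: "('k::field \<Rightarrow> 'l::ab_group_add \<Rightarrow> 'l) \<Rightarrow> ('l \<Rightarrow> 'l \<Rightarrow> 'l) \<Rightarrow> ('l, 'k) fa set"
  for scale br where
  rel_add: "fa_gen (a + b) - fa_gen a - fa_gen b \<in> uea_ideal scale br"
| rel_smult: "fa_gen (scale c a) - fa_smult c (fa_gen a) \<in> uea_ideal scale br"
| rel_br: "fa_mult (fa_gen a) (fa_gen b) - fa_mult (fa_gen b) (fa_gen a) - fa_gen (br a b) \<in> uea_ideal scale br"
| zero: "0 \<in> uea_ideal scale br"
| add: "p \<in> uea_ideal scale br \<Longrightarrow> q \<in> uea_ideal scale br \<Longrightarrow> p + q \<in> uea_ideal scale br"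
| smult: "p \<in> uea_ideal scale br \<Longrightarrow> fa_smult c p \<in> uea_ideal scale br"
| lmult: "p \<in> uea_ideal scale br \<Longrightarrow> fa_mult q p \<in> uea_ideal scale br"
| rmult: "p \<in> uea_ideal scale br \<Longrightarrow> fa_mult p q \<in> uea_ideal scale br"

definition ueq :: "('k::field \<Rightarrow> 'l::ab_group_add \<Rightarrow> 'l) \<Rightarrow> ('l \<Rightarrow> 'l \<Rightarrow> 'l) \<Rightarrow> ('l, 'k) fa \<Rightarrow> ('l, 'k) fa \<Rightarrow> bool" where
  "ueq scale br p q \<longleftrightarrow> p - q \<in> uea_ideal scale br"

text \<open>Sweedler sum  sum f(x_(1), x_(2))  for the coproduct with
 Delta(a) = a (x) 1 + 1 (x) a, computed on a representative:
 Delta(a_1...a_n) = sum over S of a_S (x) a_(complement S), order preserved.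
 (Well defined on U(L) for f bilinear and compatible with the ideal.)\<close>
definition sweedler :: "('l, 'k::field) fa \<Rightarrow> (('l, 'k) fa \<Rightarrow> ('l, 'k) fa \<Rightarrow> ('l, 'k) fa) \<Rightarrow> ('l, 'k) fa" where
  "sweedler x f = (\<Sum>w\<in>Poly_Mapping.keys x. fa_smult (Poly_Mapping.lookup x w)
      (\<Sum>S\<in>Pow {..<length w}. f (fa_word (nths w S)) (fa_word (nths w ({..<length w} - S)))))"

definition uq :: "('l, 'k::field) fa \<Rightarrow> ('l, 'k) fa" where
  "uq x = sweedler x fa_mult"

text \<open>r = q^{-1} on U(L) (q is bijective on U(L)).\<close>
definition ur :: "('k::field \<Rightarrow> 'l::ab_group_add \<Rightarrow> 'l) \<Rightarrow> ('l \<Rightarrow> 'l \<Rightarrow> 'l) \<Rightarrow> ('l, 'k) fa \<Rightarrow> ('l, 'k) fa" where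
  "ur scale br x = (SOME p. ueq scale br (uq p) x)"

definition ustar :: "('k::field \<Rightarrow> 'l::ab_group_add \<Rightarrow> 'l) \<Rightarrow> ('l \<Rightarrow> 'l \<Rightarrow> 'l) \<Rightarrow> ('l, 'k) fa \<Rightarrow> ('l, 'k) fa \<Rightarrow> ('l, 'k) fa" where
  "ustar scale br x y = sweedler x (\<lambda>u v. fa_mult (fa_mult (ur scale br u) y) (ur scale br v))"

end

theory Submission
  imports Defs
begin

text \<open>
  On words the coproduct distributes the letters, in order, between the two tensor factors; this is
  coassociative and cocommutative, and it descends to \<open>U(L)\<close> because the defining relations are
  primitive. The map \<open>q\<close> sends a word of length \<open>n\<close> to \<open>2\<^sup>n\<close> times itself modulo shorter words
  (all \<open>2\<^sup>n\<close> splittings recombine to permutations of the word), so it is bijective on \<open>U(L)\<close> when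
  \<open>2 \<noteq> 0\<close>, and \<open>r = q\<^sup>-\<^sup>1\<close> is, like \<open>q\<close>, a coalgebra map.

  For (i), both sides expand to the same four-fold Sweedler sum
  \<open>\<Sum> r(x\<^sub>1) r(y\<^sub>1) r(x\<^sub>3) z r(x\<^sub>4) r(y\<^sub>2) r(x\<^sub>2)\<close>: the right-hand side because
  \<open>\<Sum> x\<^sub>1 * (y * x\<^sub>2) = q(\<Sum> r(x\<^sub>1) r(y) r(x\<^sub>2))\<close>, using \<open>x = \<Sum> r(x\<^sub>1) r(x\<^sub>2)\<close>.
  Parts (ii) and (iii) are computations with \<open>r(a) = a/2\<close> for \<open>a \<in> L\<close>, so that
  \<open>a * y = (a y + y a)/2\<close>.
\<close>

section \<open>Linear extension and multiplication in the free algebra\<close>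

notation fa_mult (infixr "\<odot>" 70)

lemma fa_smult_lookup [simp]: "Poly_Mapping.lookup (fa_smult c p) w = c * Poly_Mapping.lookup p w"
  unfolding fa_smult_def by (simp add: Poly_Mapping.map.rep_eq when_def)

interpretation fa: vector_space fa_smult
  by unfold_locales (simp_all add: poly_mapping_eq_iff fun_eq_iff lookup_add algebra_simps)

interpretation fa_hom: vector_space_pair fa_smult fa_smult ..

abbreviation fa_linear :: "(('l, 'k::field) fa \<Rightarrow> ('l, 'k) fa) \<Rightarrow> bool" where
  "fa_linear \<equiv> Vector_Spaces.linear fa_smult fa_smult"

lemma fa_linearI:
  assumes "\<And>p q. f (p + q) = f p + f q" and "\<And>c p. f (fa_smult c p) = fa_smult c (f p)"
  shows "fa_linear f"
  by unfold_locales (fact assms)+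

lemma fa_smult_two: "fa_smult 2 p = p + p"
  using fa.scale_left_distrib[of 1 1 p] by simp

lemma fa_smult_single: "fa_smult c (Poly_Mapping.single w d) = Poly_Mapping.single w (c * d)"
  by (simp add: poly_mapping_eq_iff fun_eq_iff lookup_single when_def)

lemma keys_fa_smult: "Poly_Mapping.keys (fa_smult c p) \<subseteq> Poly_Mapping.keys p"
  by (auto simp: in_keys_iff)

definition fa_lin_ext :: "('l list \<Rightarrow> ('l, 'k::field) fa) \<Rightarrow> ('l, 'k) fa \<Rightarrow> ('l, 'k) fa" where
  "fa_lin_ext g p = (\<Sum>w\<in>Poly_Mapping.keys p. fa_smult (Poly_Mapping.lookup p w) (g w))"

lemma fa_lin_ext_superset:
  "finite A \<Longrightarrow> Poly_Mapping.keys p \<subseteq> A \<Longrightarrow>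
    fa_lin_ext g p = (\<Sum>w\<in>A. fa_smult (Poly_Mapping.lookup p w) (g w))"
  unfolding fa_lin_ext_def by (rule sum.mono_neutral_left) (auto simp: in_keys_iff)

lemma fa_linear_lin_ext: "fa_linear (fa_lin_ext g)"
proof (rule fa_linearI)
  fix p q
  show "fa_lin_ext g (p + q) = fa_lin_ext g p + fa_lin_ext g q"
    using keys_add[of p q]
    by (simp add: fa_lin_ext_superset[of "Poly_Mapping.keys p \<union> Poly_Mapping.keys q"]
        lookup_add fa.scale_left_distrib sum.distrib)
next
  fix c p
  have "fa_lin_ext g (fa_smult c p) =
      (\<Sum>w\<in>Poly_Mapping.keys p. fa_smult (Poly_Mapping.lookup (fa_smult c p) w) (g w))"
    by (rule fa_lin_ext_superset[OF finite_keys keys_fa_smult])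
  then show "fa_lin_ext g (fa_smult c p) = fa_smult c (fa_lin_ext g p)"
    by (simp add: fa_lin_ext_def fa.scale_sum_right)
qed

lemma fa_lin_ext_fa_word [simp]: "fa_lin_ext g (fa_word w) = g w"
  by (simp add: fa_lin_ext_def fa_word_def)

lemma fa_lin_ext_fa_word_id [simp]: "fa_lin_ext fa_word p = p"
  by (simp add: fa_lin_ext_def fa_word_def fa_smult_single poly_mapping_eq_iff fun_eq_iff
      lookup_sum lookup_single when_def in_keys_iff)

lemma fa_lin_ext_add_fun: "fa_lin_ext (\<lambda>w. g w + h w) p = fa_lin_ext g p + fa_lin_ext h p"
  by (simp add: fa_lin_ext_def fa.scale_right_distrib sum.distrib)

lemma fa_lin_ext_diff_fun: "fa_lin_ext (\<lambda>w. g w - h w) p = fa_lin_ext g p - fa_lin_ext h p"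
  by (simp add: fa_lin_ext_def fa.scale_right_diff_distrib sum_subtractf)

lemma fa_lin_ext_smult_fun: "fa_lin_ext (\<lambda>w. fa_smult c (g w)) p = fa_smult c (fa_lin_ext g p)"
  unfolding fa_lin_ext_def fa.scale_sum_right by (rule sum.cong) (simp_all add: mult.commute)

lemma fa_lin_ext_cong:
  "(\<And>w. w \<in> Poly_Mapping.keys p \<Longrightarrow> g w = h w) \<Longrightarrow> fa_lin_ext g p = fa_lin_ext h p"
  by (simp add: fa_lin_ext_def)

lemma fa_linear_comp_lin_ext: "fa_linear f \<Longrightarrow> f (fa_lin_ext g p) = fa_lin_ext (\<lambda>w. f (g w)) p"
  by (simp add: fa_lin_ext_def fa_hom.linear_sum fa_hom.linear_scale)

lemma fa_lin_ext_swap: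
  "fa_lin_ext (\<lambda>u. fa_lin_ext (h u) q) p = fa_lin_ext (\<lambda>v. fa_lin_ext (\<lambda>u. h u v) p) q"
  unfolding fa_lin_ext_def fa.scale_sum_right
  by (subst sum.swap) (simp add: mult.commute)

lemma fa_mult_eq_lin_ext: "p \<odot> q = fa_lin_ext (\<lambda>u. fa_lin_ext (\<lambda>v. fa_word (u @ v)) q) p"
  unfolding fa_mult_def fa_lin_ext_def by (simp add: fa.scale_sum_right fa_word_def fa_smult_single)

lemma fa_mult_fa_word: "fa_word u \<odot> fa_word v = fa_word (u @ v)"
  by (simp add: fa_mult_eq_lin_ext)

lemma fa_linear_mult_left: "fa_linear (\<lambda>p. p \<odot> q)"
  unfolding fa_mult_eq_lin_ext by (rule fa_linear_lin_ext)

lemma fa_linear_mult_right: "fa_linear (\<lambda>q. p \<odot> q)"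
proof -
  have eq: "(\<lambda>q. p \<odot> q) = fa_lin_ext (\<lambda>v. p \<odot> fa_word v)"
    unfolding fa_mult_eq_lin_ext fa_lin_ext_fa_word by (rule ext, rule fa_lin_ext_swap)
  show ?thesis
    by (subst eq) (rule fa_linear_lin_ext)
qed

lemmas fa_mult_add_left = fa_hom.linear_add[OF fa_linear_mult_left]
  and fa_mult_diff_left = fa_hom.linear_diff[OF fa_linear_mult_left]
  and fa_mult_smult_left = fa_hom.linear_scale[OF fa_linear_mult_left]

lemmas fa_mult_add_right = fa_hom.linear_add[OF fa_linear_mult_right]
  and fa_mult_diff_right = fa_hom.linear_diff[OF fa_linear_mult_right]
  and fa_mult_smult_right = fa_hom.linear_scale[OF fa_linear_mult_right]
  and fa_mult_zero_right = fa_hom.linear_0[OF fa_linear_mult_right]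

lemma fa_mult_one_left [simp]: "fa_word [] \<odot> p = p"
  by (simp add: fa_mult_eq_lin_ext)

lemma fa_mult_one_right [simp]: "p \<odot> fa_word [] = p"
  by (simp add: fa_mult_eq_lin_ext)

lemma fa_mult_assoc: "(p \<odot> q) \<odot> s = p \<odot> q \<odot> s"
  by (simp add: fa_mult_eq_lin_ext fa_linear_comp_lin_ext[OF fa_linear_lin_ext])

section \<open>Sweedler sums on words\<close>

fun unshuffle_sum :: "'l list \<Rightarrow> ('l list \<Rightarrow> 'l list \<Rightarrow> 'b::comm_monoid_add) \<Rightarrow> 'b" where
  "unshuffle_sum [] f = f [] []"
| "unshuffle_sum (a # w) f =
    unshuffle_sum w (\<lambda>u v. f (a # u) v) + unshuffle_sum w (\<lambda>u v. f u (a # v))"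

lemma sum_Pow_lessThan_Suc:
  "(\<Sum>S\<in>Pow {..<Suc n}. F S) =
    (\<Sum>T\<in>Pow {..<n}. F (Suc ` T)) + (\<Sum>T\<in>Pow {..<n}. F (insert 0 (Suc ` T)))"
proof -
  have Pow_eq: "Pow {..<Suc n} = image Suc ` Pow {..<n} \<union> (\<lambda>T. insert 0 (Suc ` T)) ` Pow {..<n}"
    unfolding lessThan_Suc_eq_insert_0 Pow_insert image_Pow_surj[OF refl, symmetric]
    by (simp add: image_image)
  have inj_Suc: "inj_on (image Suc) (Pow {..<n})"
    by (rule inj_on_image_Pow) simp
  have inj_insert: "inj_on (\<lambda>T. insert 0 (Suc ` T)) (Pow {..<n})"
    by (rule inj_onI) (auto simp: inj_image_eq_iff dest: arg_cong[where f="\<lambda>X. X - {0}"])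
  show ?thesis
    unfolding Pow_eq
    by (subst sum.union_disjoint) (auto simp: sum.reindex[OF inj_Suc] sum.reindex[OF inj_insert])
qed

lemma unshuffle_sum_eq_sum_Pow:
  "unshuffle_sum w f = (\<Sum>S\<in>Pow {..<length w}. f (nths w S) (nths w ({..<length w} - S)))"
proof (induct w arbitrary: f)
  case (Cons a w)
  let ?n = "length w"
  have compl_Suc: "{..<Suc ?n} - Suc ` T = insert 0 (Suc ` ({..<?n} - T))"
    and compl_insert: "{..<Suc ?n} - insert 0 (Suc ` T) = Suc ` ({..<?n} - T)"
    if "T \<subseteq> {..<?n}" for T
    using that unfolding lessThan_Suc_eq_insert_0 by auto
  have nths_Suc: "nths (a # w) (Suc ` T) = nths w T"
    and nths_insert: "nths (a # w) (insert 0 (Suc ` T)) = a # nths w T" for T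
    by (simp_all add: nths_Cons image_iff)
  have "(\<Sum>S\<in>Pow {..<length (a # w)}. f (nths (a # w) S) (nths (a # w) ({..<length (a # w)} - S)))
     = (\<Sum>T\<in>Pow {..<?n}. f (nths w T) (a # nths w ({..<?n} - T))) +
       (\<Sum>T\<in>Pow {..<?n}. f (a # nths w T) (nths w ({..<?n} - T)))"
    by (simp only: length_Cons sum_Pow_lessThan_Suc, intro arg_cong2[where f="(+)"] sum.cong)
      (auto simp: compl_Suc compl_insert nths_Suc nths_insert)
  then show ?case
    using Cons[of "\<lambda>u v. f u (a # v)"] Cons[of "\<lambda>u v. f (a # u) v"] by (simp add: add.commute)
qed simp

lemma unshuffle_sum_add:
  "unshuffle_sum w (\<lambda>u v. f u v + g u v) = unshuffle_sum w f + unshuffle_sum w g"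
  by (induct w arbitrary: f g) (simp_all add: add_ac)

lemma unshuffle_sum_hom:
  assumes "\<And>x y. h (x + y) = h x + h y" and "h 0 = 0"
  shows "h (unshuffle_sum w f) = unshuffle_sum w (\<lambda>u v. h (f u v))"
  by (induct w arbitrary: f) (simp_all add: assms)

lemma unshuffle_sum_diff:
  "unshuffle_sum w (\<lambda>u v. (f u v :: 'b::ab_group_add) - g u v) =
    unshuffle_sum w f - unshuffle_sum w g"
  by (induct w arbitrary: f g) simp_all

lemma unshuffle_sum_append:
  "unshuffle_sum (u @ v) f =
    unshuffle_sum u (\<lambda>u1 u2. unshuffle_sum v (\<lambda>v1 v2. f (u1 @ v1) (u2 @ v2)))"
  by (induct u arbitrary: f) (simp_all add: unshuffle_sum_add)

lemma unshuffle_sum_swap: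
  "unshuffle_sum w (\<lambda>u v. unshuffle_sum t (K u v)) =
    unshuffle_sum t (\<lambda>a b. unshuffle_sum w (\<lambda>u v. K u v a b))"
  by (induct w arbitrary: K) (simp_all add: unshuffle_sum_add)

lemma unshuffle_sum_closed:
  assumes "0 \<in> S" and "\<And>x y. x \<in> S \<Longrightarrow> y \<in> S \<Longrightarrow> x + y \<in> S"
    and "\<And>u v. length u + length v = length w \<Longrightarrow> f u v \<in> S"
  shows "unshuffle_sum w f \<in> S"
  using assms(3) by (induct w arbitrary: f) (simp_all add: assms(2))

lemma unshuffle_sum_lin_ext:
  "unshuffle_sum w (\<lambda>u v. fa_lin_ext (h u v) q) =
    fa_lin_ext (\<lambda>t. unshuffle_sum w (\<lambda>u v. h u v t)) q"
  by (induct w arbitrary: h) (simp_all add: fa_lin_ext_add_fun)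

lemma fa_linear_unshuffle_sum:
  "fa_linear f \<Longrightarrow> f (unshuffle_sum w g) = unshuffle_sum w (\<lambda>u v. f (g u v))"
  by (rule unshuffle_sum_hom) (simp_all add: fa_hom.linear_add fa_hom.linear_0)

definition unshuffle_sum4 ::
    "'l list \<Rightarrow> ('l list \<Rightarrow> 'l list \<Rightarrow> 'l list \<Rightarrow> 'l list \<Rightarrow> 'b::comm_monoid_add) \<Rightarrow> 'b" where
  "unshuffle_sum4 w F = unshuffle_sum w (\<lambda>u v. unshuffle_sum u (\<lambda>a b. unshuffle_sum v (F a b)))"

lemma unshuffle_sum4_Nil [simp]: "unshuffle_sum4 [] F = F [] [] [] []"
  by (simp add: unshuffle_sum4_def)

lemma unshuffle_sum4_Cons:
  "unshuffle_sum4 (x # w) F =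
    unshuffle_sum4 w (\<lambda>a b c d. F (x # a) b c d) + unshuffle_sum4 w (\<lambda>a b c d. F a (x # b) c d) +
    unshuffle_sum4 w (\<lambda>a b c d. F a b (x # c) d) + unshuffle_sum4 w (\<lambda>a b c d. F a b c (x # d))"
  unfolding unshuffle_sum4_def by (simp add: unshuffle_sum_add add_ac)

lemma unshuffle_sum4_swap23: "unshuffle_sum4 w F = unshuffle_sum4 w (\<lambda>a b c d. F a c b d)"
proof (induct w arbitrary: F)
  case (Cons x w)
  show ?case
    unfolding unshuffle_sum4_Cons
    using Cons[of "\<lambda>a b c d. F (x # a) b c d"] Cons[of "\<lambda>a b c d. F a (x # b) c d"]
      Cons[of "\<lambda>a b c d. F a b (x # c) d"] Cons[of "\<lambda>a b c d. F a b c (x # d)"]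
    by (simp add: add_ac)
qed simp

lemma unshuffle_sum4_swap24: "unshuffle_sum4 w F = unshuffle_sum4 w (\<lambda>a b c d. F a d c b)"
proof (induct w arbitrary: F)
  case (Cons x w)
  show ?case
    unfolding unshuffle_sum4_Cons
    using Cons[of "\<lambda>a b c d. F (x # a) b c d"] Cons[of "\<lambda>a b c d. F a (x # b) c d"]
      Cons[of "\<lambda>a b c d. F a b (x # c) d"] Cons[of "\<lambda>a b c d. F a b c (x # d)"]
    by (simp add: add_ac)
qed simp

lemma sweedler_eq_lin_ext:
  "sweedler x f = fa_lin_ext (\<lambda>w. unshuffle_sum w (\<lambda>u v. f (fa_word u) (fa_word v))) x"
  unfolding sweedler_def fa_lin_ext_def unshuffle_sum_eq_sum_Pow ..

lemma sweedler_fa_word: "sweedler (fa_word w) f = unshuffle_sum w (\<lambda>u v. f (fa_word u) (fa_word v))"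
  by (simp add: sweedler_eq_lin_ext)

lemma sweedler_fa_gen:
  "sweedler (fa_gen a) f = f (fa_gen a) (fa_word []) + f (fa_word []) (fa_gen a)"
  by (simp add: fa_gen_def sweedler_fa_word)

lemma sweedler_in_subspace: "fa.subspace S \<Longrightarrow> (\<And>u v. f u v \<in> S) \<Longrightarrow> sweedler x f \<in> S"
  unfolding sweedler_eq_lin_ext fa_lin_ext_def
  by (intro fa.subspace_sum fa.subspace_scale unshuffle_sum_closed)
    (auto intro: fa.subspace_0 fa.subspace_add)

lemma fa_linear_sweedler: "fa_linear (\<lambda>x. sweedler x f)"
  unfolding sweedler_eq_lin_ext by (rule fa_linear_lin_ext)

lemmas sweedler_add = fa_hom.linear_add[OF fa_linear_sweedler]
  and sweedler_diff = fa_hom.linear_diff[OF fa_linear_sweedler]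
  and sweedler_smult = fa_hom.linear_scale[OF fa_linear_sweedler]
  and sweedler_zero = fa_hom.linear_0[OF fa_linear_sweedler]

lemma fa_linear_comp_sweedler: "fa_linear h \<Longrightarrow> h (sweedler x f) = sweedler x (\<lambda>u v. h (f u v))"
  by (simp add: sweedler_eq_lin_ext fa_linear_comp_lin_ext fa_linear_unshuffle_sum)

lemma sweedler_add_fun: "sweedler x (\<lambda>u v. f u v + g u v) = sweedler x f + sweedler x g"
  by (simp add: sweedler_eq_lin_ext unshuffle_sum_add fa_lin_ext_add_fun)

lemma sweedler_diff_fun: "sweedler x (\<lambda>u v. f u v - g u v) = sweedler x f - sweedler x g"
  by (simp add: sweedler_eq_lin_ext unshuffle_sum_diff fa_lin_ext_diff_fun)

lemma sweedler_smult_fun: "sweedler x (\<lambda>u v. fa_smult c (f u v)) = fa_smult c (sweedler x f)"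
  by (rule fa_linear_comp_sweedler[symmetric]) (simp add: fa_linearI fa.scale_right_distrib mult.commute)

lemma fa_mult_sweedler_left: "sweedler y f \<odot> q = sweedler y (\<lambda>u v. f u v \<odot> q)"
  by (rule fa_linear_comp_sweedler[OF fa_linear_mult_left])

lemma fa_mult_sweedler_right: "p \<odot> sweedler y f = sweedler y (\<lambda>u v. p \<odot> f u v)"
  by (rule fa_linear_comp_sweedler[OF fa_linear_mult_right])

lemma sweedler_sweedler: "sweedler (sweedler y f) g = sweedler y (\<lambda>u v. sweedler (f u v) g)"
  by (rule fa_linear_comp_sweedler[OF fa_linear_sweedler])

lemma sweedler_swap:
  "sweedler x (\<lambda>u v. sweedler y (K u v)) = sweedler y (\<lambda>a b. sweedler x (\<lambda>u v. K u v a b))"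
  unfolding sweedler_eq_lin_ext unshuffle_sum_lin_ext
  by (subst fa_lin_ext_swap, intro fa_lin_ext_cong unshuffle_sum_swap)

lemma sweedler_mult:
  "sweedler (p \<odot> p') g = sweedler p (\<lambda>a b. sweedler p' (\<lambda>c d. g (a \<odot> c) (b \<odot> d)))"
proof -
  have "sweedler (p \<odot> p') g = fa_lin_ext (\<lambda>u. fa_lin_ext (\<lambda>v. sweedler (fa_word (u @ v)) g) p') p"
    by (simp add: fa_mult_eq_lin_ext fa_linear_comp_lin_ext[OF fa_linear_sweedler])
  also have "\<dots> = sweedler p (\<lambda>a b. sweedler p' (\<lambda>c d. g (a \<odot> c) (b \<odot> d)))"
    by (simp only: sweedler_fa_word unshuffle_sum_append sweedler_eq_lin_ext[of p]
        sweedler_eq_lin_ext[of p'] fa_mult_fa_word unshuffle_sum_lin_ext)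
  finally show ?thesis .
qed

text \<open>\<open>sweedler4 x F\<close> is \<open>\<Sum> F x\<^sub>1 x\<^sub>2 x\<^sub>3 x\<^sub>4\<close> in Sweedler notation, \<open>x\<^sub>1 \<otimes> x\<^sub>2\<close>
  coming from the first tensor factor of \<open>\<Delta>x\<close>; by coassociativity and cocommutativity it is
  symmetric in the four slots.\<close>

definition sweedler4 :: "('l, 'k::field) fa \<Rightarrow>
    (('l, 'k) fa \<Rightarrow> ('l, 'k) fa \<Rightarrow> ('l, 'k) fa \<Rightarrow> ('l, 'k) fa \<Rightarrow> ('l, 'k) fa) \<Rightarrow> ('l, 'k) fa" where
  "sweedler4 x F = sweedler x (\<lambda>u v. sweedler u (\<lambda>a b. sweedler v (F a b)))"

lemma sweedler4_eq_lin_ext: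
  "sweedler4 x F =
    fa_lin_ext (\<lambda>w. unshuffle_sum4 w (\<lambda>a b c d. F (fa_word a) (fa_word b) (fa_word c) (fa_word d))) x"
  by (simp add: sweedler4_def sweedler_eq_lin_ext[of x] sweedler_fa_word unshuffle_sum4_def)

lemma sweedler4_swap23: "sweedler4 x F = sweedler4 x (\<lambda>a b c d. F a c b d)"
  unfolding sweedler4_eq_lin_ext by (subst unshuffle_sum4_swap23) (rule refl)

lemma sweedler4_swap24: "sweedler4 x F = sweedler4 x (\<lambda>a b c d. F a d c b)"
  unfolding sweedler4_eq_lin_ext by (subst unshuffle_sum4_swap24) (rule refl)

section \<open>The enveloping algebra as a quotient\<close>

locale uea =
  fixes scale :: "'k::field \<Rightarrow> 'l::ab_group_add \<Rightarrow> 'l" and br :: "'l \<Rightarrow> 'l \<Rightarrow> 'l"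
begin

abbreviation ideal :: "('l, 'k) fa set" ("\<I>") where
  "\<I> \<equiv> uea_ideal scale br"

abbreviation ueq_rel :: "('l, 'k) fa \<Rightarrow> ('l, 'k) fa \<Rightarrow> bool" (infix "\<simeq>" 50) where
  "p \<simeq> q \<equiv> ueq scale br p q"

declare uea_ideal.zero [simp]

lemma subspace_ideal: "fa.subspace \<I>"
  by (simp add: fa.subspace_def uea_ideal.add uea_ideal.smult)

lemmas ideal_uminus = fa.subspace_neg[OF subspace_ideal]
  and ideal_diff = fa.subspace_diff[OF subspace_ideal]
  and ideal_sum = fa.subspace_sum[OF subspace_ideal]
  and ideal_sweedler = sweedler_in_subspace[OF subspace_ideal]

lemma ueq_refl [simp]: "p \<simeq> p"
  by (simp add: ueq_def)

lemma ueq_sym: "p \<simeq> q \<Longrightarrow> q \<simeq> p"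
  unfolding ueq_def by (drule ideal_uminus) simp

lemma ueq_trans [trans]: "p \<simeq> q \<Longrightarrow> q \<simeq> s \<Longrightarrow> p \<simeq> s"
  unfolding ueq_def by (drule (1) uea_ideal.add) simp

lemma ueq_eq_trans [trans]: "p \<simeq> q \<Longrightarrow> q = s \<Longrightarrow> p \<simeq> s"
  and eq_ueq_trans [trans]: "p = q \<Longrightarrow> q \<simeq> s \<Longrightarrow> p \<simeq> s"
  by simp_all

lemma ueq_zero_iff: "p \<simeq> 0 \<longleftrightarrow> p \<in> \<I>"
  by (simp add: ueq_def)

lemma ueq_add: "p \<simeq> p' \<Longrightarrow> q \<simeq> q' \<Longrightarrow> p + q \<simeq> p' + q'"
  unfolding ueq_def by (drule (1) uea_ideal.add) (simp add: algebra_simps)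

lemma ueq_diff: "p \<simeq> p' \<Longrightarrow> q \<simeq> q' \<Longrightarrow> p - q \<simeq> p' - q'"
  unfolding ueq_def by (drule (1) ideal_diff) (simp add: algebra_simps)

lemma ueq_smult: "p \<simeq> p' \<Longrightarrow> fa_smult c p \<simeq> fa_smult c p'"
  unfolding ueq_def by (drule uea_ideal.smult[where c=c]) (simp add: fa.scale_right_diff_distrib)

lemma ueq_mult: "p \<simeq> p' \<Longrightarrow> q \<simeq> q' \<Longrightarrow> p \<odot> q \<simeq> p' \<odot> q'"
proof -
  assume "p \<simeq> p'" "q \<simeq> q'"
  then have "(p - p') \<odot> q + p' \<odot> (q - q') \<in> \<I>"
    unfolding ueq_def by (intro uea_ideal.add uea_ideal.rmult uea_ideal.lmult)
  then show ?thesis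
    unfolding ueq_def by (simp add: fa_mult_diff_left fa_mult_diff_right)
qed

lemma ueq_sum: "(\<And>a. a \<in> A \<Longrightarrow> f a \<simeq> g a) \<Longrightarrow> sum f A \<simeq> sum g A"
  unfolding ueq_def sum_subtractf[symmetric] by (rule ideal_sum)

lemma ueq_lin_ext: "(\<And>w. g w \<simeq> h w) \<Longrightarrow> fa_lin_ext g p \<simeq> fa_lin_ext h p"
  unfolding fa_lin_ext_def by (intro ueq_sum ueq_smult)

lemma ueq_sweedler: "(\<And>u v. f u v \<simeq> g u v) \<Longrightarrow> sweedler x f \<simeq> sweedler x g"
  unfolding ueq_def sweedler_diff_fun[symmetric] by (rule ideal_sweedler)

text \<open>Sweedler sums are computed on representatives, so the functions fed into them must respect
  \<open>\<simeq>\<close>: these two notions stand for linear and bilinear maps on \<open>U(L)\<close>.\<close>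

definition ueq_linear :: "(('l, 'k) fa \<Rightarrow> ('l, 'k) fa) \<Rightarrow> bool" where
  "ueq_linear \<phi> \<longleftrightarrow> (\<forall>p p'. p \<simeq> p' \<longrightarrow> \<phi> p \<simeq> \<phi> p') \<and>
     (\<forall>c p p'. \<phi> (fa_smult c p + p') \<simeq> fa_smult c (\<phi> p) + \<phi> p')"

definition ueq_bilinear :: "(('l, 'k) fa \<Rightarrow> ('l, 'k) fa \<Rightarrow> ('l, 'k) fa) \<Rightarrow> bool" where
  "ueq_bilinear G \<longleftrightarrow> (\<forall>q. ueq_linear (\<lambda>p. G p q)) \<and> (\<forall>p. ueq_linear (\<lambda>q. G p q))"

lemma ueq_linear_cong: "ueq_linear \<phi> \<Longrightarrow> p \<simeq> p' \<Longrightarrow> \<phi> p \<simeq> \<phi> p'"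
  by (simp add: ueq_linear_def)

lemma ueq_linear_lincomb: "ueq_linear \<phi> \<Longrightarrow> \<phi> (fa_smult c p + p') \<simeq> fa_smult c (\<phi> p) + \<phi> p'"
  by (simp add: ueq_linear_def)

lemma ueq_linear_zero:
  assumes "ueq_linear \<phi>" shows "\<phi> 0 \<simeq> 0"
proof -
  have "\<phi> 0 \<simeq> \<phi> 0 + \<phi> 0"
    using ueq_linear_lincomb[OF assms, of 1 0 0] by simp
  then have "- (\<phi> 0 - (\<phi> 0 + \<phi> 0)) \<in> \<I>"
    unfolding ueq_def by (rule ideal_uminus)
  then show ?thesis
    by (simp add: ueq_def)
qed

lemma ueq_linear_add: "ueq_linear \<phi> \<Longrightarrow> \<phi> (p + p') \<simeq> \<phi> p + \<phi> p'"
  using ueq_linear_lincomb[of \<phi> 1 p p'] by simp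

lemma ueq_linear_smult:
  assumes "ueq_linear \<phi>" shows "\<phi> (fa_smult c p) \<simeq> fa_smult c (\<phi> p)"
proof -
  have "\<phi> (fa_smult c p + 0) \<simeq> fa_smult c (\<phi> p) + \<phi> 0"
    by (rule ueq_linear_lincomb[OF assms])
  also have "\<dots> \<simeq> fa_smult c (\<phi> p) + 0"
    by (rule ueq_add[OF ueq_refl ueq_linear_zero[OF assms]])
  finally show ?thesis by simp
qed

lemma ueq_linear_sum:
  assumes "ueq_linear \<phi>" shows "\<phi> (sum f A) \<simeq> (\<Sum>a\<in>A. \<phi> (f a))"
proof (induct A rule: infinite_finite_induct)
  case (insert x F)
  then show ?case
    using ueq_linear_add[OF assms, of "f x" "sum f F"] by (simp add: ueq_trans ueq_add)
qed (simp_all add: ueq_linear_zero[OF assms])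

lemma ueq_linear_unshuffle_sum:
  assumes "ueq_linear \<phi>" shows "\<phi> (unshuffle_sum w f) \<simeq> unshuffle_sum w (\<lambda>u v. \<phi> (f u v))"
proof (induct w arbitrary: f)
  case (Cons a w)
  show ?case
    by (simp, rule ueq_trans[OF ueq_linear_add[OF assms] ueq_add[OF Cons Cons]])
qed simp

lemma ueq_linear_sweedler:
  assumes "ueq_linear \<phi>" shows "\<phi> (sweedler x f) \<simeq> sweedler x (\<lambda>u v. \<phi> (f u v))"
proof -
  have "\<phi> (sweedler x f) \<simeq>
      fa_lin_ext (\<lambda>w. \<phi> (unshuffle_sum w (\<lambda>u v. f (fa_word u) (fa_word v)))) x"
    unfolding sweedler_eq_lin_ext fa_lin_ext_def
    by (rule ueq_trans[OF ueq_linear_sum[OF assms] ueq_sum[OF ueq_linear_smult[OF assms]]])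
  also have "\<dots> \<simeq> sweedler x (\<lambda>u v. \<phi> (f u v))"
    unfolding sweedler_eq_lin_ext by (intro ueq_lin_ext ueq_linear_unshuffle_sum[OF assms])
  finally show ?thesis .
qed

lemma ueq_linear_id: "ueq_linear (\<lambda>p. p)"
  by (simp add: ueq_linear_def)

lemma ueq_linear_of_fa_linear:
  assumes "fa_linear \<phi>" and "\<And>p. p \<in> \<I> \<Longrightarrow> \<phi> p \<in> \<I>"
  shows "ueq_linear \<phi>"
  unfolding ueq_linear_def ueq_def
  using assms
  by (simp add: fa_hom.linear_diff[symmetric] fa_hom.linear_add fa_hom.linear_scale uea_ideal.zero)

lemma ueq_linear_mult_left: "ueq_linear (\<lambda>p. p \<odot> q)"
  by (rule ueq_linear_of_fa_linear[OF fa_linear_mult_left uea_ideal.rmult])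

lemma ueq_linear_mult_right: "ueq_linear (\<lambda>q. p \<odot> q)"
  by (rule ueq_linear_of_fa_linear[OF fa_linear_mult_right uea_ideal.lmult])

lemma ueq_linear_comp:
  assumes "ueq_linear \<phi>" and "ueq_linear \<psi>"
  shows "ueq_linear (\<lambda>p. \<phi> (\<psi> p))"
  unfolding ueq_linear_def
proof (intro conjI allI impI)
  fix p p' :: "('l, 'k) fa"
  assume "p \<simeq> p'"
  then show "\<phi> (\<psi> p) \<simeq> \<phi> (\<psi> p')"
    by (intro ueq_linear_cong[OF assms(1)] ueq_linear_cong[OF assms(2)])
next
  fix c and p p' :: "('l, 'k) fa"
  show "\<phi> (\<psi> (fa_smult c p + p')) \<simeq> fa_smult c (\<phi> (\<psi> p)) + \<phi> (\<psi> p')"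
    by (rule ueq_trans[OF ueq_linear_cong[OF assms(1) ueq_linear_lincomb[OF assms(2)]]
          ueq_linear_lincomb[OF assms(1)]])
qed

lemma ueq_linear_sweedler_fun:
  assumes "\<And>u v. ueq_linear (K u v)"
  shows "ueq_linear (\<lambda>p. sweedler y (\<lambda>u v. K u v p))"
  unfolding ueq_linear_def
proof (intro conjI allI impI)
  fix p p' :: "('l, 'k) fa"
  assume "p \<simeq> p'"
  then show "sweedler y (\<lambda>u v. K u v p) \<simeq> sweedler y (\<lambda>u v. K u v p')"
    by (intro ueq_sweedler ueq_linear_cong[OF assms])
next
  fix c and p p' :: "('l, 'k) fa"
  have "sweedler y (\<lambda>u v. K u v (fa_smult c p + p')) \<simeq>
      sweedler y (\<lambda>u v. fa_smult c (K u v p) + K u v p')"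
    by (intro ueq_sweedler ueq_linear_lincomb[OF assms])
  then show "sweedler y (\<lambda>u v. K u v (fa_smult c p + p')) \<simeq>
      fa_smult c (sweedler y (\<lambda>u v. K u v p)) + sweedler y (\<lambda>u v. K u v p')"
    by (simp add: sweedler_add_fun sweedler_smult_fun)
qed

lemma ueq_bilinearD:
  assumes "ueq_bilinear G"
  shows "ueq_linear (\<lambda>p. G p q)" and "ueq_linear (\<lambda>q. G p q)"
  using assms by (simp_all add: ueq_bilinear_def)

lemma ueq_bilinear_cong: "ueq_bilinear G \<Longrightarrow> p \<simeq> p' \<Longrightarrow> q \<simeq> q' \<Longrightarrow> G p q \<simeq> G p' q'"
  by (rule ueq_trans[OF ueq_linear_cong[OF ueq_bilinearD(1)] ueq_linear_cong[OF ueq_bilinearD(2)]])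

lemma ueq_bilinear_mult: "ueq_bilinear (\<odot>)"
  by (simp add: ueq_bilinear_def ueq_linear_mult_left ueq_linear_mult_right)

lemma ueq_bilinear_comp:
  assumes "ueq_bilinear G" and "ueq_linear \<phi>" and "ueq_linear \<psi>"
  shows "ueq_bilinear (\<lambda>p q. G (\<phi> p) (\<psi> q))"
  unfolding ueq_bilinear_def
  using ueq_linear_comp[OF ueq_bilinearD(1)[OF assms(1)] assms(2)]
    ueq_linear_comp[OF ueq_bilinearD(2)[OF assms(1)] assms(3)]
  by blast

lemma ueq_bilinear_sweedler:
  "(\<And>u v. ueq_bilinear (K u v)) \<Longrightarrow> ueq_bilinear (\<lambda>p q. sweedler y (\<lambda>u v. K u v p q))"
  by (simp add: ueq_bilinear_def ueq_linear_sweedler_fun)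

lemma ueq_bilinear_lincomb_left:
  assumes "ueq_bilinear G" and "p - fa_smult c q - s \<in> \<I>"
  shows "G p v - fa_smult c (G q v) - G s v \<in> \<I>"
proof -
  have "G p v \<simeq> G (fa_smult c q + s) v"
    using assms(2) by (intro ueq_bilinear_cong[OF assms(1)]) (simp_all add: ueq_def algebra_simps)
  also have "\<dots> \<simeq> fa_smult c (G q v) + G s v"
    by (rule ueq_linear_lincomb[OF ueq_bilinearD(1)[OF assms(1)]])
  finally show ?thesis
    by (simp add: ueq_def algebra_simps)
qed

lemma ueq_bilinear_lincomb_right:
  assumes "ueq_bilinear G" and "p - fa_smult c q - s \<in> \<I>"
  shows "G v p - fa_smult c (G v q) - G v s \<in> \<I>"
proof -
  have "G v p \<simeq> G v (fa_smult c q + s)"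
    using assms(2) by (intro ueq_bilinear_cong[OF assms(1)]) (simp_all add: ueq_def algebra_simps)
  also have "\<dots> \<simeq> fa_smult c (G v q) + G v s"
    by (rule ueq_linear_lincomb[OF ueq_bilinearD(2)[OF assms(1)]])
  finally show ?thesis
    by (simp add: ueq_def algebra_simps)
qed

text \<open>The coproduct is well defined on \<open>U(L)\<close>: the generating relations are primitive.\<close>

lemma sweedler_in_ideal: "p \<in> \<I> \<Longrightarrow> ueq_bilinear G \<Longrightarrow> sweedler p G \<in> \<I>"
proof (induct p arbitrary: G rule: uea_ideal.induct)
  case (rel_add a b)
  let ?p = "fa_gen (a + b)" and ?q = "fa_gen a" and ?s = "fa_gen b" and ?e = "fa_word []"
  have rel: "?p - fa_smult 1 ?q - ?s \<in> \<I>"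
    using uea_ideal.rel_add by simp
  have "G ?p ?e - fa_smult 1 (G ?q ?e) - G ?s ?e + (G ?e ?p - fa_smult 1 (G ?e ?q) - G ?e ?s) \<in> \<I>"
    by (intro uea_ideal.add ueq_bilinear_lincomb_left[OF rel_add rel]
        ueq_bilinear_lincomb_right[OF rel_add rel])
  then show ?case
    by (simp add: sweedler_diff sweedler_add sweedler_fa_gen algebra_simps)
next
  case (rel_smult c a)
  let ?p = "fa_gen (scale c a)" and ?q = "fa_gen a" and ?e = "fa_word []"
  have rel: "?p - fa_smult c ?q - 0 \<in> \<I>"
    using uea_ideal.rel_smult by simp
  have "G ?p ?e - fa_smult c (G ?q ?e) - G 0 ?e + (G ?e ?p - fa_smult c (G ?e ?q) - G ?e 0)
      + G 0 ?e + G ?e 0 \<in> \<I>"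
    using ueq_linear_zero[OF ueq_bilinearD(1)[OF rel_smult]]
      ueq_linear_zero[OF ueq_bilinearD(2)[OF rel_smult]]
    by (intro uea_ideal.add ueq_bilinear_lincomb_left[OF rel_smult rel]
        ueq_bilinear_lincomb_right[OF rel_smult rel]) (simp_all add: ueq_zero_iff)
  then show ?case
    by (simp add: sweedler_diff sweedler_smult sweedler_fa_gen algebra_simps fa.scale_right_distrib)
next
  case (rel_br a b)
  let ?p = "fa_gen a \<odot> fa_gen b" and ?q = "fa_gen b \<odot> fa_gen a" and ?s = "fa_gen (br a b)"
    and ?e = "fa_word []"
  have rel: "?p - fa_smult 1 ?q - ?s \<in> \<I>"
    using uea_ideal.rel_br by simp
  have "G ?p ?e - fa_smult 1 (G ?q ?e) - G ?s ?e + (G ?e ?p - fa_smult 1 (G ?e ?q) - G ?e ?s) \<in> \<I>"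
    by (intro uea_ideal.add ueq_bilinear_lincomb_left[OF rel_br rel]
        ueq_bilinear_lincomb_right[OF rel_br rel])
  then show ?case
    by (simp add: sweedler_diff sweedler_add sweedler_fa_gen fa_gen_def fa_mult_fa_word sweedler_fa_word
        algebra_simps)
next
  case zero
  then show ?case
    by (simp add: sweedler_zero uea_ideal.zero)
next
  case (add p q)
  then show ?case
    by (simp add: sweedler_add uea_ideal.add)
next
  case (smult p c)
  then show ?case
    by (simp add: sweedler_smult uea_ideal.smult)
next
  case (lmult p q)
  show ?case
    unfolding sweedler_mult
    by (intro ideal_sweedler lmult(2) ueq_bilinear_comp[OF lmult(3)] ueq_linear_mult_right)
next
  case (rmult p q)
  show ?case
    unfolding sweedler_mult
    by (intro rmult(2) ueq_bilinear_sweedler ueq_bilinear_comp[OF rmult(3)] ueq_linear_mult_left)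
qed

lemma sweedler_ueq_cong: "p \<simeq> p' \<Longrightarrow> ueq_bilinear G \<Longrightarrow> sweedler p G \<simeq> sweedler p' G"
  unfolding ueq_def sweedler_diff[symmetric] by (rule sweedler_in_ideal)

lemma uq_cong: "p \<simeq> p' \<Longrightarrow> uq p \<simeq> uq p'"
  unfolding uq_def by (rule sweedler_ueq_cong[OF _ ueq_bilinear_mult])

lemma sweedler_uq:
  assumes "ueq_bilinear G"
  shows "sweedler (uq x) G \<simeq> sweedler x (\<lambda>u v. G (uq u) (uq v))"
proof -
  have "sweedler (uq x) G = sweedler4 x (\<lambda>a b c d. G (a \<odot> c) (b \<odot> d))"
    unfolding uq_def sweedler_sweedler sweedler_mult sweedler4_def ..
  also have "\<dots> = sweedler4 x (\<lambda>a b c d. G (a \<odot> b) (c \<odot> d))"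
    by (rule sweedler4_swap23)
  also have "\<dots> \<simeq> sweedler x (\<lambda>u v. G (uq u) (uq v))"
    unfolding sweedler4_def uq_def
  proof (rule ueq_sym, rule ueq_sweedler)
    fix u v
    have "G (sweedler u (\<odot>)) (sweedler v (\<odot>)) \<simeq> sweedler u (\<lambda>a b. G (a \<odot> b) (sweedler v (\<odot>)))"
      by (rule ueq_linear_sweedler[OF ueq_bilinearD(1)[OF assms]])
    also have "\<dots> \<simeq> sweedler u (\<lambda>a b. sweedler v (\<lambda>c d. G (a \<odot> b) (c \<odot> d)))"
      by (intro ueq_sweedler ueq_linear_sweedler[OF ueq_bilinearD(2)[OF assms]])
    finally show "G (sweedler u (\<odot>)) (sweedler v (\<odot>)) \<simeq>
        sweedler u (\<lambda>a b. sweedler v (\<lambda>c d. G (a \<odot> b) (c \<odot> d)))" .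
  qed
  finally show ?thesis .
qed

end

section \<open>Bijectivity of \<open>q\<close>\<close>

definition fa_deg_le :: "nat \<Rightarrow> ('l, 'k::field) fa set" where
  "fa_deg_le n = {p. \<forall>w\<in>Poly_Mapping.keys p. length w \<le> n}"

lemma subspace_fa_deg_le: "fa.subspace (fa_deg_le n)"
  unfolding fa.subspace_def fa_deg_le_def using keys_add keys_fa_smult by fastforce

lemmas fa_deg_le_zero [simp] = fa.subspace_0[OF subspace_fa_deg_le]

lemma fa_deg_le_mono: "m \<le> n \<Longrightarrow> p \<in> fa_deg_le m \<Longrightarrow> p \<in> fa_deg_le n"
  by (auto simp: fa_deg_le_def)

lemma fa_word_in_deg_le: "length w \<le> n \<Longrightarrow> fa_word w \<in> fa_deg_le n"
  by (simp add: fa_deg_le_def fa_word_def)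

lemma fa_gen_mult_in_deg_le: "p \<in> fa_deg_le n \<Longrightarrow> fa_gen a \<odot> p \<in> fa_deg_le (Suc n)"
  unfolding fa_mult_eq_lin_ext fa_gen_def fa_lin_ext_fa_word fa_lin_ext_def
  by (intro fa.subspace_sum[OF subspace_fa_deg_le] fa.subspace_scale[OF subspace_fa_deg_le])
    (auto simp: fa_deg_le_def fa_word_def)

lemma ex_fa_deg_le: "\<exists>n. p \<in> fa_deg_le n"
  by (rule exI[of _ "Max (insert 0 (length ` Poly_Mapping.keys p))"]) (auto simp: fa_deg_le_def)

lemma fa_deg_le_0_eq:
  assumes "p \<in> fa_deg_le 0"
  shows "p = fa_smult (Poly_Mapping.lookup p []) (fa_word [])"
proof -
  have "Poly_Mapping.lookup p w = 0" if "w \<noteq> []" for w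
    using assms that by (auto simp: fa_deg_le_def in_keys_iff)
  then show ?thesis
    by (auto simp: poly_mapping_eq_iff fun_eq_iff fa_word_def lookup_single when_def)
qed

lemma uq_fa_word: "uq (fa_word w) = unshuffle_sum w (\<lambda>u v. fa_word (u @ v))"
  by (simp add: uq_def sweedler_fa_word fa_mult_fa_word)

lemma fa_linear_uq: "fa_linear uq"
  unfolding uq_def[abs_def] by (rule fa_linear_sweedler)

lemmas uq_add = fa_hom.linear_add[OF fa_linear_uq]
  and uq_smult = fa_hom.linear_scale[OF fa_linear_uq]
  and uq_diff = fa_hom.linear_diff[OF fa_linear_uq]

lemma uq_eq_lin_ext: "uq p = fa_lin_ext (\<lambda>w. uq (fa_word w)) p"
  by (subst (1) fa_lin_ext_fa_word_id[symmetric]) (rule fa_linear_comp_lin_ext[OF fa_linear_uq])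

lemma uq_fa_word_in_deg_le: "uq (fa_word w) \<in> fa_deg_le (length w)"
  unfolding uq_fa_word
  by (rule unshuffle_sum_closed)
    (auto intro: fa.subspace_0 fa.subspace_add subspace_fa_deg_le fa_word_in_deg_le)

context uea
begin

definition filtration :: "nat \<Rightarrow> ('l, 'k) fa set" where
  "filtration n = {e + i |e i. e \<in> fa_deg_le n \<and> i \<in> \<I>}"

lemma subspace_filtration: "fa.subspace (filtration n)"
  unfolding filtration_def by (rule fa.subspace_sums[OF subspace_fa_deg_le subspace_ideal])

lemma ideal_subset_filtration: "p \<in> \<I> \<Longrightarrow> p \<in> filtration n"
  unfolding filtration_def by force

lemma fa_deg_le_subset_filtration: "p \<in> fa_deg_le n \<Longrightarrow> p \<in> filtration n"
  unfolding filtration_def by force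

lemma fa_gen_mult_in_filtration: "p \<in> filtration n \<Longrightarrow> fa_gen a \<odot> p \<in> filtration (Suc n)"
  unfolding filtration_def
  by (auto simp: fa_mult_add_right) (blast intro: fa_gen_mult_in_deg_le uea_ideal.lmult)

lemma fa_word_commute_in_filtration:
  "fa_word (u @ a # v) - fa_word (a # u @ v) \<in> filtration (length u + length v)"
proof (induct u)
  case (Cons b u)
  let ?w = "fa_word (u @ v)" and ?n = "length (b # u) + length v"
  have eq: "fa_word ((b # u) @ a # v) - fa_word (a # (b # u) @ v) =
      fa_gen b \<odot> (fa_word (u @ a # v) - fa_word (a # u @ v))
      + (fa_gen b \<odot> fa_gen a - fa_gen a \<odot> fa_gen b - fa_gen (br b a)) \<odot> ?w
      + fa_gen (br b a) \<odot> ?w"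
    by (simp add: fa_mult_diff_left fa_mult_diff_right fa_gen_def fa_mult_fa_word)
  have "fa_gen b \<odot> (fa_word (u @ a # v) - fa_word (a # u @ v)) \<in> filtration ?n"
    using fa_gen_mult_in_filtration[OF Cons] by simp
  moreover have "(fa_gen b \<odot> fa_gen a - fa_gen a \<odot> fa_gen b - fa_gen (br b a)) \<odot> ?w \<in> filtration ?n"
    by (intro ideal_subset_filtration uea_ideal.rmult uea_ideal.rel_br)
  moreover have "fa_gen (br b a) \<odot> ?w \<in> filtration ?n"
    by (intro fa_deg_le_subset_filtration) (simp add: fa_gen_def fa_mult_fa_word fa_word_in_deg_le)
  ultimately show ?case
    unfolding eq by (intro fa.subspace_add[OF subspace_filtration])
qed (simp add: ideal_subset_filtration)

lemma uq_fa_word_leading_term: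
  "uq (fa_word w) - fa_smult (2 ^ length w) (fa_word w) \<in> filtration (length w - 1)"
proof (induct w)
  case Nil
  then show ?case
    by (simp add: uq_fa_word ideal_subset_filtration)
next
  case (Cons a w)
  let ?n = "length w"
  define front where "front = unshuffle_sum w (\<lambda>u v. fa_word (a # u @ v) :: ('l, 'k) fa)"
  define middle where "middle = unshuffle_sum w (\<lambda>u v. fa_word (u @ a # v) :: ('l, 'k) fa)"
  have front_eq: "front = fa_gen a \<odot> uq (fa_word w)"
    unfolding front_def uq_fa_word
    by (subst fa_linear_unshuffle_sum[OF fa_linear_mult_right]) (simp add: fa_gen_def fa_mult_fa_word)
  have "middle - front \<in> filtration ?n"
    unfolding front_def middle_def unshuffle_sum_diff[symmetric]
    by (rule unshuffle_sum_closed)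
      (metis fa.subspace_0 fa.subspace_add subspace_filtration fa_word_commute_in_filtration)+
  moreover have "fa_gen a \<odot> (uq (fa_word w) - fa_smult (2 ^ ?n) (fa_word w)) \<in> filtration ?n"
  proof (cases w)
    case Nil
    then show ?thesis
      by (simp add: uq_fa_word fa_mult_zero_right ideal_subset_filtration)
  next
    case (Cons b w')
    then show ?thesis
      using fa_gen_mult_in_filtration[OF Cons.hyps, of a] by simp
  qed
  moreover have "uq (fa_word (a # w)) = front + middle"
    by (simp add: uq_fa_word front_def middle_def)
  then have "uq (fa_word (a # w)) - fa_smult (2 ^ length (a # w)) (fa_word (a # w)) =
      (middle - front) + fa_smult 2 (fa_gen a \<odot> (uq (fa_word w) - fa_smult (2 ^ ?n) (fa_word w)))"
    by (simp add: front_eq fa_mult_diff_right fa_mult_smult_right fa_gen_def fa_mult_fa_word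
        fa.scale_right_diff_distrib fa_smult_two)
  ultimately show ?case
    by (simp add: fa.subspace_add[OF subspace_filtration] fa.subspace_scale[OF subspace_filtration])
qed

lemma uq_leading_term:
  assumes "p \<in> fa_deg_le (Suc n)"
  shows "uq p - fa_smult (2 ^ Suc n) p \<in> filtration n"
proof -
  have "uq p - fa_smult (2 ^ Suc n) p =
      fa_lin_ext (\<lambda>w. uq (fa_word w) - fa_smult (2 ^ Suc n) (fa_word w)) p"
    by (subst uq_eq_lin_ext) (simp add: fa_lin_ext_diff_fun fa_lin_ext_smult_fun)
  also have "\<dots> \<in> filtration n"
    unfolding fa_lin_ext_def
  proof (intro fa.subspace_sum[OF subspace_filtration] fa.subspace_scale[OF subspace_filtration])
    fix w assume "w \<in> Poly_Mapping.keys p"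
    then have "length w \<le> Suc n"
      using assms by (auto simp: fa_deg_le_def)
    then consider "length w = Suc n" | "length w \<le> n"
      by linarith
    then show "uq (fa_word w) - fa_smult (2 ^ Suc n) (fa_word w) \<in> filtration n"
    proof cases
      case 1
      then show ?thesis
        using uq_fa_word_leading_term[of w] by simp
    next
      case 2
      then show ?thesis
        by (intro fa_deg_le_subset_filtration fa.subspace_diff[OF subspace_fa_deg_le]
            fa.subspace_scale[OF subspace_fa_deg_le] fa_word_in_deg_le
            fa_deg_le_mono[OF _ uq_fa_word_in_deg_le])
    qed
  qed
  finally show ?thesis .
qed


lemma uq_ueq_leading_term:
  assumes "p \<in> fa_deg_le (Suc n)"
  obtains e where "e \<in> fa_deg_le n" and "uq p \<simeq> fa_smult (2 ^ Suc n) p + e"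
  using uq_leading_term[OF assms] by (force simp: filtration_def ueq_def algebra_simps)

end

locale uea_char_ne_2 = uea scale br
  for scale :: "'k::field \<Rightarrow> 'l::ab_group_add \<Rightarrow> 'l" and br +
  assumes two_ne_zero: "(2::'k) \<noteq> 0"
begin

lemma uq_in_ideal_imp_in_ideal: "p \<in> fa_deg_le n \<Longrightarrow> uq p \<in> \<I> \<Longrightarrow> p \<in> \<I>"
proof (induct n arbitrary: p)
  case 0
  then have "uq p = p"
    by (subst (1 2) fa_deg_le_0_eq[OF 0(1)]) (simp add: uq_smult uq_fa_word)
  then show ?case
    using 0 by simp
next
  case (Suc n)
  define t :: 'k where "t = 2 ^ Suc n"
  have "t \<noteq> 0"
    using two_ne_zero by (simp add: t_def)
  obtain e where e: "e \<in> fa_deg_le n" "uq p \<simeq> fa_smult t p + e"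
    using uq_ueq_leading_term[OF Suc(2)] unfolding t_def .
  let ?p' = "fa_smult (- inverse t) e"
  have uq_p: "uq p \<simeq> 0"
    using Suc(3) by (simp add: ueq_zero_iff)
  have "fa_smult (inverse t) (fa_smult t p + e) \<simeq> fa_smult (inverse t) 0"
    by (rule ueq_smult[OF ueq_trans[OF ueq_sym[OF e(2)] uq_p]])
  then have p_p': "p \<simeq> ?p'"
    using \<open>t \<noteq> 0\<close> by (simp add: ueq_def fa.scale_right_distrib)
  have "uq ?p' \<simeq> 0"
    by (rule ueq_trans[OF uq_cong[OF ueq_sym[OF p_p']] uq_p])
  then have "?p' \<in> \<I>"
    unfolding ueq_zero_iff by (rule Suc(1)[OF fa.subspace_scale[OF subspace_fa_deg_le e(1)]])
  then show ?case
    by (metis ueq_trans[OF p_p'] ueq_zero_iff)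
qed

lemma ex_uq_ueq: "p \<in> fa_deg_le n \<Longrightarrow> \<exists>y. uq y \<simeq> p"
proof (induct n arbitrary: p)
  case 0
  then have "uq p = p"
    by (subst (1 2) fa_deg_le_0_eq[OF 0]) (simp add: uq_smult uq_fa_word)
  then show ?case
    by (metis ueq_refl)
next
  case (Suc n)
  define t :: 'k where "t = 2 ^ Suc n"
  have "t \<noteq> 0"
    using two_ne_zero by (simp add: t_def)
  obtain e where e: "e \<in> fa_deg_le n" "uq p \<simeq> fa_smult t p + e"
    using uq_ueq_leading_term[OF Suc(2)] unfolding t_def .
  obtain y where y: "uq y \<simeq> - fa_smult (inverse t) e"
    using Suc(1) fa.subspace_neg[OF subspace_fa_deg_le fa.subspace_scale[OF subspace_fa_deg_le e(1)]]
    by blast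
  have "uq (fa_smult (inverse t) p) \<simeq> fa_smult (inverse t) (fa_smult t p + e)"
    unfolding uq_smult by (rule ueq_smult[OF e(2)])
  also have "\<dots> = p + fa_smult (inverse t) e"
    using \<open>t \<noteq> 0\<close> by (simp add: fa.scale_right_distrib)
  finally have "uq (fa_smult (inverse t) p) + uq y \<simeq>
      (p + fa_smult (inverse t) e) + - fa_smult (inverse t) e"
    using y by (rule ueq_add)
  then have "uq (fa_smult (inverse t) p + y) \<simeq> p"
    by (simp add: uq_add)
  then show ?case ..
qed

lemma uq_cancel: "uq p \<simeq> uq p' \<Longrightarrow> p \<simeq> p'"
  unfolding ueq_def uq_diff[symmetric] using ex_fa_deg_le uq_in_ideal_imp_in_ideal by blast

lemma uq_surj: "\<exists>y. uq y \<simeq> x"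
  using ex_fa_deg_le ex_uq_ueq by blast

end

section \<open>The twisted product\<close>

context uea_char_ne_2
begin

abbreviation r :: "('l, 'k) fa \<Rightarrow> ('l, 'k) fa" where
  "r \<equiv> ur scale br"

abbreviation star :: "('l, 'k) fa \<Rightarrow> ('l, 'k) fa \<Rightarrow> ('l, 'k) fa" (infixr "\<star>" 70) where
  "x \<star> y \<equiv> ustar scale br x y"

lemma uq_ur: "uq (r x) \<simeq> x"
  unfolding ur_def by (rule someI_ex[OF uq_surj])

lemma ur_unique: "uq p \<simeq> x \<Longrightarrow> r x \<simeq> p"
  by (rule uq_cancel, rule ueq_trans[OF uq_ur ueq_sym])

lemma ur_uq: "r (uq p) \<simeq> p"
  by (rule ur_unique) simp

lemma ueq_linear_ur: "ueq_linear r"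
  unfolding ueq_linear_def
proof (intro conjI allI impI)
  fix p p' :: "('l, 'k) fa"
  assume "p \<simeq> p'"
  then show "r p \<simeq> r p'"
    by (intro ur_unique ueq_trans[OF uq_ur ueq_sym])
next
  fix c and p p' :: "('l, 'k) fa"
  have "uq (fa_smult c (r p) + r p') \<simeq> fa_smult c p + p'"
    by (simp add: uq_add uq_smult ueq_add ueq_smult uq_ur)
  then show "r (fa_smult c p + p') \<simeq> fa_smult c (r p) + r p'"
    by (rule ur_unique)
qed

lemma sweedler_ur:
  assumes "ueq_bilinear G"
  shows "sweedler (r x) G \<simeq> sweedler x (\<lambda>u v. G (r u) (r v))"
proof -
  have G_ur: "ueq_bilinear (\<lambda>u v. G (r u) (r v))"
    by (rule ueq_bilinear_comp[OF assms ueq_linear_ur ueq_linear_ur])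
  have "sweedler x (\<lambda>u v. G (r u) (r v)) \<simeq> sweedler (uq (r x)) (\<lambda>u v. G (r u) (r v))"
    by (rule sweedler_ueq_cong[OF ueq_sym[OF uq_ur] G_ur])
  also have "\<dots> \<simeq> sweedler (r x) (\<lambda>u v. G (r (uq u)) (r (uq v)))"
    by (rule sweedler_uq[OF G_ur])
  also have "\<dots> \<simeq> sweedler (r x) G"
    by (intro ueq_sweedler ueq_bilinear_cong[OF assms] ur_uq)
  finally show ?thesis
    by (rule ueq_sym)
qed

lemma ueq_sweedler_ur_mult: "x \<simeq> sweedler x (\<lambda>u v. r u \<odot> r v)"
proof -
  have "x \<simeq> uq (r x)"
    by (rule ueq_sym[OF uq_ur])
  also have "uq (r x) = sweedler (r x) (\<odot>)"
    by (simp add: uq_def)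
  also have "\<dots> \<simeq> sweedler x (\<lambda>u v. r u \<odot> r v)"
    by (rule sweedler_ur[OF ueq_bilinear_mult])
  finally show ?thesis .
qed

lemma ustar_eq: "x \<star> y = sweedler x (\<lambda>u v. r u \<odot> y \<odot> r v)"
  by (simp add: ustar_def fa_mult_assoc)

lemma ur_one: "r (fa_word []) \<simeq> fa_word []"
  by (rule ur_unique) (simp add: uq_fa_word)

lemma ur_gen: "r (fa_gen a) \<simeq> fa_smult (1/2) (fa_gen a)"
proof (rule ur_unique)
  show "uq (fa_smult (1/2) (fa_gen a)) \<simeq> fa_gen a"
    using two_ne_zero by (simp add: uq_smult fa_gen_def uq_fa_word flip: fa_smult_two)
qed

lemma ustar_gen: "fa_gen a \<star> y \<simeq> fa_smult (1/2) (fa_gen a \<odot> y + y \<odot> fa_gen a)"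
proof -
  have "fa_gen a \<star> y = r (fa_gen a) \<odot> y \<odot> r (fa_word []) + r (fa_word []) \<odot> y \<odot> r (fa_gen a)"
    by (simp add: ustar_eq sweedler_fa_gen)
  also have "\<dots> \<simeq> fa_smult (1/2) (fa_gen a) \<odot> y \<odot> fa_word [] + fa_word [] \<odot> y \<odot> fa_smult (1/2) (fa_gen a)"
    by (intro ueq_add ueq_mult ur_gen ur_one ueq_refl)
  also have "\<dots> = fa_smult (1/2) (fa_gen a \<odot> y + y \<odot> fa_gen a)"
    by (simp add: fa_mult_smult_left fa_mult_smult_right fa.scale_right_distrib)
  finally show ?thesis .
qed

lemma ustar_gen_commute: "fa_gen a \<star> fa_gen b \<simeq> fa_gen b \<star> fa_gen a"
  by (rule ueq_trans[OF ustar_gen ueq_sym[OF ueq_trans[OF ustar_gen]]]) (simp add: add.commute)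

lemma ustar_gen_ustar_gen:
  "fa_gen a \<star> fa_gen b \<star> fa_gen c \<simeq>
    fa_smult (1/4) (fa_word [a, b, c] + fa_word [a, c, b] + fa_word [b, c, a] + fa_word [c, b, a])"
proof -
  let ?bc = "fa_smult (1/2) (fa_gen b \<odot> fa_gen c + fa_gen c \<odot> fa_gen b)"
  have "fa_gen a \<star> fa_gen b \<star> fa_gen c \<simeq>
      fa_smult (1/2) (fa_gen a \<odot> (fa_gen b \<star> fa_gen c) + (fa_gen b \<star> fa_gen c) \<odot> fa_gen a)"
    by (rule ustar_gen)
  also have "\<dots> \<simeq> fa_smult (1/2) (fa_gen a \<odot> ?bc + ?bc \<odot> fa_gen a)"
    by (intro ueq_smult ueq_add ueq_mult ustar_gen ueq_refl)
  also have "\<dots> =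
      fa_smult (1/4) (fa_word [a, b, c] + fa_word [a, c, b] + fa_word [b, c, a] + fa_word [c, b, a])"
    by (simp add: fa_mult_smult_left fa_mult_smult_right fa_mult_add_left fa_mult_add_right
        fa.scale_right_distrib fa_gen_def fa_mult_fa_word algebra_simps)
  finally show ?thesis .
qed

lemma ustar_gen_bracket:
  "fa_gen a \<star> fa_gen b \<star> fa_gen c - fa_gen b \<star> fa_gen a \<star> fa_gen c \<simeq>
    fa_smult (1/4) (fa_gen (br (br a b) c))"
proof -
  have "fa_gen a \<star> fa_gen b \<star> fa_gen c - fa_gen b \<star> fa_gen a \<star> fa_gen c \<simeq>
      fa_smult (1/4) (fa_word [a, b, c] + fa_word [a, c, b] + fa_word [b, c, a] + fa_word [c, b, a])
      - fa_smult (1/4) (fa_word [b, a, c] + fa_word [b, c, a] + fa_word [a, c, b] + fa_word [c, a, b])"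
    by (intro ueq_diff ustar_gen_ustar_gen)
  also have "\<dots> =
      fa_smult (1/4) (fa_word [a, b, c] - fa_word [b, a, c] + fa_word [c, b, a] - fa_word [c, a, b])"
    by (simp add: fa.scale_right_diff_distrib[symmetric] algebra_simps)
  also have "\<dots> \<simeq> fa_smult (1/4) (fa_gen (br (br a b) c))"
  proof (rule ueq_smult)
    let ?ab = "fa_gen a \<odot> fa_gen b - fa_gen b \<odot> fa_gen a - fa_gen (br a b)"
    let ?abc = "fa_gen (br a b) \<odot> fa_gen c - fa_gen c \<odot> fa_gen (br a b) - fa_gen (br (br a b) c)"
    have bracket_rels: "?ab \<odot> fa_gen c - fa_gen c \<odot> ?ab + ?abc \<in> \<I>"
      by (intro uea_ideal.add ideal_diff uea_ideal.rmult uea_ideal.lmult uea_ideal.rel_br)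
    have expand: "?ab \<odot> fa_gen c - fa_gen c \<odot> ?ab + ?abc =
        (fa_word [a, b, c] - fa_word [b, a, c] + fa_word [c, b, a] - fa_word [c, a, b])
        - fa_gen (br (br a b) c)"
      by (simp add: fa_mult_diff_left fa_mult_diff_right fa_mult_add_left fa_mult_add_right
          fa_gen_def fa_mult_fa_word algebra_simps)
    show "fa_word [a, b, c] - fa_word [b, a, c] + fa_word [c, b, a] - fa_word [c, a, b] \<simeq>
        fa_gen (br (br a b) c)"
      using bracket_rels unfolding ueq_def expand .
  qed
  finally show ?thesis .
qed

lemma ustar_cong_right: "y \<simeq> y' \<Longrightarrow> x \<star> y \<simeq> x \<star> y'"
  unfolding ustar_eq by (intro ueq_sweedler ueq_mult ueq_refl)

lemma sweedler_ur_mult: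
  assumes "ueq_bilinear H"
  shows "sweedler (r p \<odot> m) H \<simeq> sweedler p (\<lambda>a b. sweedler m (\<lambda>c d. H (r a \<odot> c) (r b \<odot> d)))"
  unfolding sweedler_mult
  by (intro sweedler_ur ueq_bilinear_sweedler ueq_bilinear_comp[OF assms] ueq_linear_mult_left)

lemma sweedler_ur_mult3:
  assumes "ueq_bilinear H"
  shows "sweedler (r p \<odot> r q \<odot> r s) H \<simeq>
    sweedler p (\<lambda>a1 a2. sweedler q (\<lambda>e f. sweedler s (\<lambda>b1 b2.
      H (r a1 \<odot> r e \<odot> r b1) (r a2 \<odot> r f \<odot> r b2))))"
proof -
  have H_mult: "ueq_bilinear (\<lambda>c d. H (x \<odot> c) (y \<odot> d))" for x y
    by (rule ueq_bilinear_comp[OF assms ueq_linear_mult_right ueq_linear_mult_right])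
  have "sweedler (r p \<odot> r q \<odot> r s) H \<simeq>
      sweedler p (\<lambda>a1 a2. sweedler (r q \<odot> r s) (\<lambda>c d. H (r a1 \<odot> c) (r a2 \<odot> d)))"
    by (rule sweedler_ur_mult[OF assms])
  also have "\<dots> \<simeq> sweedler p (\<lambda>a1 a2. sweedler q (\<lambda>e f.
      sweedler (r s) (\<lambda>c d. H (r a1 \<odot> r e \<odot> c) (r a2 \<odot> r f \<odot> d))))"
    by (intro ueq_sweedler sweedler_ur_mult[OF H_mult])
  also have "\<dots> \<simeq> sweedler p (\<lambda>a1 a2. sweedler q (\<lambda>e f. sweedler s (\<lambda>b1 b2.
      H (r a1 \<odot> r e \<odot> r b1) (r a2 \<odot> r f \<odot> r b2))))"
    by (intro ueq_sweedler sweedler_ur[OF ueq_bilinear_comp[OF H_mult ueq_linear_mult_right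
          ueq_linear_mult_right]])
  finally show ?thesis .
qed

lemma sweedler_ur_conj:
  assumes "ueq_bilinear H"
  shows "sweedler (sweedler x (\<lambda>a b. r a \<odot> r y \<odot> r b)) H \<simeq>
    sweedler4 x (\<lambda>a1 a2 b1 b2. sweedler y (\<lambda>e f. H (r a1 \<odot> r e \<odot> r b1) (r a2 \<odot> r f \<odot> r b2)))"
proof -
  have "sweedler (sweedler x (\<lambda>a b. r a \<odot> r y \<odot> r b)) H =
      sweedler x (\<lambda>a b. sweedler (r a \<odot> r y \<odot> r b) H)"
    by (rule sweedler_sweedler)
  also have "\<dots> \<simeq> sweedler x (\<lambda>a b. sweedler a (\<lambda>a1 a2. sweedler y (\<lambda>e f. sweedler b (\<lambda>b1 b2.
      H (r a1 \<odot> r e \<odot> r b1) (r a2 \<odot> r f \<odot> r b2)))))"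
    by (intro ueq_sweedler sweedler_ur_mult3[OF assms])
  also have "\<dots> = sweedler4 x (\<lambda>a1 a2 b1 b2. sweedler y (\<lambda>e f.
      H (r a1 \<odot> r e \<odot> r b1) (r a2 \<odot> r f \<odot> r b2)))"
    by (simp only: sweedler4_def sweedler_swap[of y])
  finally show ?thesis .
qed

lemma sweedler_ustar_ustar_ustar:
  "sweedler x (\<lambda>u v. u \<star> y \<star> v \<star> z) =
    sweedler4 x (\<lambda>a b c d. sweedler y (\<lambda>e f. r a \<odot> r e \<odot> r c \<odot> z \<odot> r d \<odot> r f \<odot> r b))"
  by (simp only: ustar_eq fa_mult_sweedler_left fa_mult_sweedler_right fa_mult_assoc sweedler4_def
      sweedler_swap[of y])

lemma sweedler_ustar_ustar:
  "sweedler x (\<lambda>u v. u \<star> y \<star> v) \<simeq>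
    sweedler4 x (\<lambda>a b c d. sweedler y (\<lambda>e f. r a \<odot> r e \<odot> r c \<odot> r d \<odot> r f \<odot> r b))"
proof -
  have "sweedler x (\<lambda>u v. u \<star> y \<star> v) \<simeq> sweedler x (\<lambda>u v. u \<star> y \<star> sweedler v (\<lambda>c d. r c \<odot> r d))"
    by (intro ueq_sweedler ustar_cong_right ueq_sweedler_ur_mult)
  also have "\<dots> = sweedler4 x (\<lambda>a b c d. sweedler y (\<lambda>e f. r a \<odot> r e \<odot> r c \<odot> r d \<odot> r f \<odot> r b))"
    by (simp only: ustar_eq fa_mult_sweedler_left fa_mult_sweedler_right fa_mult_assoc sweedler4_def
        sweedler_swap[of y])
  finally show ?thesis .
qed

lemma sweedler_ustar_twisted_assoc:
  "sweedler x (\<lambda>u v. u \<star> y \<star> v \<star> z) \<simeq> sweedler x (\<lambda>u v. (u \<star> y \<star> v) \<star> z)"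
proof -
  let ?M = "sweedler x (\<lambda>a b. r a \<odot> r y \<odot> r b)"
  have mult_z: "ueq_bilinear (\<lambda>s t. s \<odot> z \<odot> t)"
    by (rule ueq_bilinear_comp[OF ueq_bilinear_mult ueq_linear_id ueq_linear_mult_right])
  have ur_mult_z: "ueq_bilinear (\<lambda>s t. r s \<odot> z \<odot> r t)"
    by (rule ueq_bilinear_comp[OF mult_z ueq_linear_ur ueq_linear_ur])
  have "sweedler x (\<lambda>u v. u \<star> y \<star> v) \<simeq>
      sweedler4 x (\<lambda>a b c d. sweedler y (\<lambda>e f. r a \<odot> r e \<odot> r c \<odot> r d \<odot> r f \<odot> r b))"
    by (rule sweedler_ustar_ustar)
  also have "\<dots> =
      sweedler4 x (\<lambda>a1 a2 b1 b2. sweedler y (\<lambda>e f. (r a1 \<odot> r e \<odot> r b1) \<odot> r a2 \<odot> r f \<odot> r b2))"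
    by (subst sweedler4_swap24) (simp only: fa_mult_assoc)
  also have "\<dots> \<simeq> uq ?M"
    unfolding uq_def by (rule ueq_sym[OF sweedler_ur_conj[OF ueq_bilinear_mult]])
  finally have N_eq: "sweedler x (\<lambda>u v. u \<star> y \<star> v) \<simeq> uq ?M" .
  have "sweedler x (\<lambda>u v. u \<star> y \<star> v \<star> z) =
      sweedler4 x (\<lambda>a1 a2 b1 b2. sweedler y (\<lambda>e f. (r a1 \<odot> r e \<odot> r b1) \<odot> z \<odot> r a2 \<odot> r f \<odot> r b2))"
    unfolding sweedler_ustar_ustar_ustar by (subst sweedler4_swap24) (simp only: fa_mult_assoc)
  also have "\<dots> \<simeq> sweedler ?M (\<lambda>s t. s \<odot> z \<odot> t)"
    by (rule ueq_sym[OF sweedler_ur_conj[OF mult_z]])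
  also have "\<dots> \<simeq> sweedler ?M (\<lambda>s t. r (uq s) \<odot> z \<odot> r (uq t))"
    by (intro ueq_sweedler ueq_mult ueq_refl ueq_sym[OF ur_uq])
  also have "\<dots> \<simeq> sweedler (uq ?M) (\<lambda>s t. r s \<odot> z \<odot> r t)"
    by (rule ueq_sym[OF sweedler_uq[OF ur_mult_z]])
  also have "\<dots> \<simeq> sweedler (sweedler x (\<lambda>u v. u \<star> y \<star> v)) (\<lambda>s t. r s \<odot> z \<odot> r t)"
    by (rule sweedler_ueq_cong[OF ueq_sym[OF N_eq] ur_mult_z])
  also have "\<dots> = sweedler x (\<lambda>u v. (u \<star> y \<star> v) \<star> z)"
    by (simp only: sweedler_sweedler ustar_eq[of _ z])
  finally show ?thesis .
qed

end

theorem proposition4p3: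
  fixes scale :: "'k::field \<Rightarrow> 'l::ab_group_add \<Rightarrow> 'l" and br :: "'l \<Rightarrow> 'l \<Rightarrow> 'l"
  assumes "lie_algebra scale br" and "(2::'k) \<noteq> 0"
  shows "(\<forall>x y z. ueq scale br
            (sweedler x (\<lambda>u v. ustar scale br u (ustar scale br y (ustar scale br v z))))
            (sweedler x (\<lambda>u v. ustar scale br (ustar scale br u (ustar scale br y v)) z)))
       \<and> (\<forall>a b. ueq scale br (ustar scale br (fa_gen a) (fa_gen b)) (ustar scale br (fa_gen b) (fa_gen a)))
       \<and> (\<forall>a b c. ueq scale br
            (ustar scale br (fa_gen a) (ustar scale br (fa_gen b) (fa_gen c))
             - ustar scale br (fa_gen b) (ustar scale br (fa_gen a) (fa_gen c)))
            (fa_smult (1/4) (fa_gen (br (br a b) c))))"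
proof -
  interpret uea_char_ne_2 scale br
    using assms(2) by unfold_locales
  show ?thesis
    using sweedler_ustar_twisted_assoc ustar_gen_commute ustar_gen_bracket by blast
qed

end
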